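(* $$\sum_{k=1}^\infty\frac{18675k^2+7627k+670}{(4k+1)(-8)^k\binom{4k}k}=-30-192\log2.$$ *)

theory Defs
  imports Complex_Main
begin

end

theory Submission
  imports Defs "HOL-Analysis.Analysis"
begin

(* The Beta integral gives 1 / ((4k + 1) * binomial(4k, k)) = int_0^1 x^k (1 - x)^(3k) dx, so the
   k-th term is int_0^1 p(k) tau(x)^k dx, where p is the quadratic numerator and
   tau(x) = -x (1 - x)^3 / 8. As |tau| <= 1/8 on [0, 1], summation and integration can be
   interchanged, and the sum becomes int_0^1 G(tau(x)) dx for the rational generating function
   G(t) = sum_k p(k) t^k. As a function of x the integrand is N(x) / D(x)^3 with
   D(x) = 8 + x (1 - x)^3, which has the elementary antiderivative
   A(x) / D(x)^2 - 670 x - 192 ln(1 + x) + 48 ln D(x); since D(0) = D(1) = 8, its increment over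
   [0, 1] is -30 - 192 ln 2. *)

lemma geometric_sums_Suc:
  fixes z :: "'a::{real_normed_field,banach}"
  assumes "norm z < 1"
  shows "(\<lambda>n. z ^ Suc n) sums (z / (1 - z))"
  using sums_mult[OF geometric_sums[OF assms], of z] by (simp add: field_simps)

lemma geometric_deriv_sums_Suc:
  fixes z :: "'a::{real_normed_field,banach}"
  assumes "norm z < 1"
  shows "(\<lambda>n. of_nat (Suc n) * z ^ Suc n) sums (z / (1 - z)^2)"
  using sums_mult[OF geometric_deriv_sums[OF assms], of z] by (simp add: field_simps)

lemma geometric_second_deriv_sums:
  fixes z :: "'a::{real_normed_field,banach}"
  assumes "norm z < 1"
  shows "(\<lambda>n. of_nat (Suc n) * of_nat (Suc (Suc n)) * z ^ n) sums (2 / (1 - z)^3)"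
proof -
  have "(\<lambda>n. diffs (\<lambda>n. of_nat (Suc n)) n * z ^ n) sums (2 / (1 - z)^3)"
  proof (rule termdiffs_sums_strong[where K = 1])
    fix w :: 'a
    assume "norm w < 1"
    then show "(\<lambda>n. of_nat (Suc n) * w ^ n) sums (1 / (1 - w)^2)"
      by (rule geometric_deriv_sums)
  next
    have "1 - z \<noteq> 0"
      using assms by auto
    then show "((\<lambda>w. 1 / (1 - w)^2) has_field_derivative 2 / (1 - z)^3) (at z)"
      by (auto intro!: derivative_eq_intros simp: divide_simps) (simp add: eval_nat_numeral)
  qed (use assms in auto)
  then show ?thesis
    by (simp add: diffs_def mult_ac)
qed

lemma sums_Suc_square_power:
  fixes z :: "'a::{real_normed_field,banach}"
  assumes "norm z < 1"
  shows "(\<lambda>n. of_nat (Suc n)^2 * z ^ Suc n) sums (z * (1 + z) / (1 - z)^3)"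
proof -
  have "1 - z \<noteq> 0"
    using assms by auto
  have "(\<lambda>n. z * (of_nat (Suc n) * of_nat (Suc (Suc n)) * z ^ n - of_nat (Suc n) * z ^ n))
          sums (z * (2 / (1 - z)^3 - 1 / (1 - z)^2))"
    by (intro sums_mult sums_diff geometric_second_deriv_sums geometric_deriv_sums assms)
  also have "z * (2 / (1 - z)^3 - 1 / (1 - z)^2) = z * (1 + z) / (1 - z)^3"
    using \<open>1 - z \<noteq> 0\<close> by (simp add: divide_simps) (simp add: eval_nat_numeral algebra_simps)
  finally show ?thesis
    by (simp add: algebra_simps power2_eq_square)
qed

lemma has_integral_power_mult_power:
  "((\<lambda>x. x ^ m * (1 - x) ^ n) has_integral (fact m * fact n / fact (m + n + 1))) {0..1::real}"
proof -
  have "((\<lambda>x. x powr real m * (1 - x) powr real n) has_integral Beta (real m + 1) (real n + 1)) {0..1}"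
    using has_integral_Beta_real[of "real m + 1" "real n + 1"] by simp
  then have "((\<lambda>x. x ^ m * (1 - x) ^ n) has_integral Beta (real m + 1) (real n + 1)) {0..1::real}"
    by (rule has_integral_spike_finite[of "{0, 1}", rotated 2]) (auto simp: powr_realpow)
  moreover have "Beta (real m + 1) (real n + 1) = fact m * fact n / fact (m + n + 1)"
    using Gamma_fact[of m, where 'a = real] Gamma_fact[of n, where 'a = real]
      Gamma_fact[of "m + n + 1", where 'a = real]
    by (simp add: Beta_def add_ac)
  ultimately show ?thesis
    by simp
qed

lemma has_integral_power_mult_power_binomial:
  assumes "k \<le> n"
  shows "((\<lambda>x. x ^ k * (1 - x) ^ (n - k)) has_integral 1 / ((real n + 1) * real (n choose k))) {0..1::real}"
proof -
  have "fact k * fact (n - k) / fact (k + (n - k) + 1) = (1 :: real) / ((real n + 1) * real (n choose k))"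
    using assms by (simp add: binomial_fact fact_reduce[of "Suc n"] field_simps del: fact_Suc)
  then show ?thesis
    using has_integral_power_mult_power[of k "n - k"] by simp
qed

lemma sums_integral_termwise:
  fixes f :: "nat \<Rightarrow> 'a::euclidean_space \<Rightarrow> 'b::euclidean_space"
  assumes int: "\<And>n. (f n has_integral I n) (cbox a b)"
    and bound: "\<And>n x. x \<in> cbox a b \<Longrightarrow> norm (f n x) \<le> c n"
    and "summable c"
    and sums: "\<And>x. x \<in> cbox a b \<Longrightarrow> (\<lambda>n. f n x) sums g x"
  shows "I sums integral (cbox a b) g"
proof (cases "cbox a b = {}")
  case True
  then show ?thesis
    using int by (simp add: sums_def)
next
  case False
  then have "c n \<ge> 0" for n
    using bound norm_ge_zero order_trans by blast
  have partial_int: "((\<lambda>x. \<Sum>n<N. f n x) has_integral (\<Sum>n<N. I n)) (cbox a b)" for N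
    by (intro has_integral_sum int) auto
  have "norm (\<Sum>n<N. f n x) \<le> suminf c" if "x \<in> cbox a b" for N x
  proof -
    have "norm (\<Sum>n<N. f n x) \<le> (\<Sum>n<N. c n)"
      by (rule order_trans[OF norm_sum sum_mono]) (rule bound[OF that])
    also have "\<dots> \<le> suminf c"
      by (rule sum_le_suminf) (use \<open>summable c\<close> \<open>\<And>n. c n \<ge> 0\<close> in auto)
    finally show ?thesis .
  qed
  then have "(\<lambda>N. integral (cbox a b) (\<lambda>x. \<Sum>n<N. f n x)) \<longlonglongrightarrow> integral (cbox a b) g"
    using partial_int sums unfolding sums_def
    by (intro dominated_convergence(2)[where h = "\<lambda>_. suminf c"]) auto
  moreover have "integral (cbox a b) (\<lambda>x. \<Sum>n<N. f n x) = (\<Sum>n<N. I n)" for N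
    using partial_int by (rule integral_unique)
  ultimately show ?thesis
    by (simp add: sums_def)
qed

definition coeff_poly :: "real \<Rightarrow> real" where
  "coeff_poly k = 18675 * k^2 + 7627 * k + 670"

definition coeff_gf :: "real \<Rightarrow> real" where
  "coeff_gf t = 18675 * (t * (1 + t) / (1 - t)^3) + 7627 * (t / (1 - t)^2) + 670 * (t / (1 - t))"

lemma coeff_gf_sums:
  assumes "norm t < 1"
  shows "(\<lambda>n. coeff_poly (real (Suc n)) * t ^ Suc n) sums coeff_gf t"
proof -
  have "(\<lambda>n. 18675 * (real (Suc n)^2 * t ^ Suc n) + 7627 * (real (Suc n) * t ^ Suc n)
      + 670 * t ^ Suc n) sums coeff_gf t"
    unfolding coeff_gf_def
    by (intro sums_add sums_mult sums_Suc_square_power geometric_deriv_sums_Suc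
        geometric_sums_Suc assms)
  then show ?thesis
    by (simp add: coeff_poly_def algebra_simps)
qed

definition tau :: "real \<Rightarrow> real" where
  "tau x = x * (1 - x)^3 / (-8)"

lemma abs_tau_le:
  assumes "x \<in> {0..1}"
  shows "\<bar>tau x\<bar> \<le> 1 / 8"
proof -
  have "x * (1 - x)^3 \<le> 1"
    using assms by (intro mult_le_one power_le_one) auto
  then show ?thesis
    using assms by (simp add: tau_def)
qed

lemma has_integral_tau_power:
  "((\<lambda>x. tau x ^ k) has_integral 1 / ((4 * real k + 1) * (-8) ^ k * real ((4 * k) choose k))) {0..1}"
proof -
  have "tau x ^ k = (x * (1 - x)^3) ^ k / (-8) ^ k" for x
    unfolding tau_def by (rule power_divide)
  also have "(x * (1 - x)^3) ^ k = x ^ k * (1 - x) ^ (4 * k - k)" for x :: real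
    by (simp add: power_mult_distrib power_mult)
  finally have "tau x ^ k = x ^ k * (1 - x) ^ (4 * k - k) / (-8) ^ k" for x .
  then show ?thesis
    using has_integral_divide[OF has_integral_power_mult_power_binomial[of k "4 * k"], of "(-8) ^ k"]
    by (simp add: mult_ac)
qed

definition denom :: "real \<Rightarrow> real" where
  "denom x = 8 + x * (1 - x)^3"

definition integrand_numer :: "real \<Rightarrow> real" where
  "integrand_numer x = -1726208*x + 5256288*x^2 - 5645278*x^3 + 2897198*x^4 - 1577400*x^5
     + 1221240*x^6 - 550404*x^7 + 162084*x^8 - 56280*x^9 + 24120*x^10 - 6030*x^11 + 670*x^12"

lemma tau_eq_denom: "tau x = (8 - denom x) / 8"
  by (simp add: tau_def denom_def)

lemma denom_pos:
  assumes "x \<in> {0..1}"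
  shows "denom x > 0"
  using assms by (simp add: denom_def add_pos_nonneg)

lemma coeff_gf_tau:
  assumes "denom x \<noteq> 0"
  shows "coeff_gf (tau x) = integrand_numer x / denom x ^ 3"
proof -
  have "integrand_numer x = - 8 * 18675 * (denom x - 8) * (16 - denom x)
      - 8 * 7627 * (denom x - 8) * denom x - 670 * (denom x - 8) * denom x^2"
    unfolding integrand_numer_def denom_def by algebra
  then show ?thesis
    unfolding coeff_gf_def tau_eq_denom using assms
    by (simp add: divide_simps) (simp add: algebra_simps eval_nat_numeral)
qed

(* Hermite reduction of the integral of integrand_numer / denom^3; the logarithmic terms come from
   the factorisation denom x = (1 + x) * (8 - 7 x + 4 x^2 - x^3). *)
definition antideriv_numer :: "real \<Rightarrow> real" where
  "antideriv_numer x = -30720 + 47104*x - 76600*x^2 + 160176*x^3 - 124560*x^4 + 36544*x^5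
     - 2040*x^6 + 336*x^7"

definition antideriv :: "real \<Rightarrow> real" where
  "antideriv x = antideriv_numer x / denom x^2 - 670 * x - 192 * ln (1 + x) + 48 * ln (denom x)"

lemma antideriv_has_derivative:
  assumes "denom x > 0" "1 + x > 0"
  shows "(antideriv has_real_derivative integrand_numer x / denom x ^ 3) (at x)"
proof -
  define numer' where
    "numer' = 47104 - 153200*x + 480528*x^2 - 498240*x^3 + 182720*x^4 - 12240*x^5 + 2352*x^6"
  define denom' where "denom' = (1 - x)^3 - 3 * x * (1 - x)^2"
  have numer': "(antideriv_numer has_real_derivative numer') (at x)"
    unfolding antideriv_numer_def numer'_def
    by (rule derivative_eq_intros refl)+ (simp add: eval_nat_numeral algebra_simps)
  have denom': "(denom has_real_derivative denom') (at x)"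
    unfolding denom_def denom'_def
    by (rule derivative_eq_intros refl)+ (simp add: eval_nat_numeral algebra_simps)
  have numerator_identity:
    "(numer' * denom x - 2 * antideriv_numer x * denom') * (1 + x)
      + (- 670 * denom x * (1 + x) - 192 * denom x + 48 * denom' * (1 + x)) * denom x^2
      = integrand_numer x * (1 + x)"
    unfolding numer'_def denom'_def denom_def antideriv_numer_def integrand_numer_def by algebra
  show ?thesis
    unfolding antideriv_def
    by (rule derivative_eq_intros numer' denom' refl | (use assms in simp; fail))+
       (use assms numerator_identity in \<open>simp add: divide_simps, algebra\<close>)
qed

lemma has_integral_coeff_gf_tau:
  "((\<lambda>x. coeff_gf (tau x)) has_integral -30 - 192 * ln 2) {0..1}"
proof -
  have "(antideriv has_vector_derivative integrand_numer x / denom x ^ 3) (at x within {0..1})"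
    if "x \<in> {0..1}" for x
    unfolding has_real_derivative_iff_has_vector_derivative[symmetric]
    by (rule has_field_derivative_at_within, rule antideriv_has_derivative)
       (use that denom_pos in auto)
  then have "((\<lambda>x. integrand_numer x / denom x ^ 3) has_integral antideriv 1 - antideriv 0) {0..1}"
    by (intro fundamental_theorem_of_calculus) auto
  also have "antideriv 1 - antideriv 0 = -30 - 192 * ln 2"
    using ln_realpow[of 2 3] by (simp add: antideriv_def antideriv_numer_def denom_def)
  finally show ?thesis
    by (elim has_integral_eq[rotated]) (simp add: coeff_gf_tau denom_pos less_imp_neq[symmetric])
qed

theorem lemma3p1:
  shows "(\<lambda>n. let k = real (Suc n) in
            (18675 * k^2 + 7627 * k + 670) /
            ((4 * k + 1) * (-8) ^ Suc n * real ((4 * Suc n) choose (Suc n))))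
         sums (-30 - 192 * ln 2)" (is "?a sums _")
proof -
  define f where "f n = (\<lambda>x. coeff_poly (real (Suc n)) * tau x ^ Suc n)" for n
  have integrals: "(f n has_integral ?a n) {0..1}" for n
    using has_integral_mult_right[OF has_integral_tau_power[of "Suc n"], of "coeff_poly (Suc n)"]
    by (simp add: f_def coeff_poly_def Let_def)
  have bound: "norm (f n x) \<le> coeff_poly (real (Suc n)) * (1 / 8) ^ Suc n" if "x \<in> {0..1}" for n x
    unfolding f_def real_norm_def abs_mult power_abs
    by (intro mult_mono power_mono abs_tau_le that) (auto simp: coeff_poly_def)
  have summable: "summable (\<lambda>n. coeff_poly (real (Suc n)) * (1 / 8) ^ Suc n)"
    by (rule sums_summable[OF coeff_gf_sums]) simp
  have sums: "(\<lambda>n. f n x) sums coeff_gf (tau x)" if "x \<in> {0..1}" for x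
    unfolding f_def by (rule coeff_gf_sums) (use abs_tau_le[OF that] in simp)
  have "?a sums integral {0..1} (\<lambda>x. coeff_gf (tau x))"
    by (rule sums_integral_termwise[where a = "0 :: real" and b = 1, unfolded box_real,
          OF integrals bound summable sums])
  then show ?thesis
    using has_integral_coeff_gf_tau by (simp add: integral_unique)
qed

end
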